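(* Let $\mathcal{X}$ be a finite data domain, $\widetilde D\in\mathcal{X}^n$ a private dataset, $\widehat D\in\mathcal{X}^m$ a public dataset with support $\widehat{\mathcal{X}}$, $Q$ a finite set of statistical queries $q:\mathcal{X}\to[0,1]$, $\tilde\varepsilon>0$ and $\beta\in(0,1)$. There exist absolute constants such that, running PMW$^{\mathrm{Pub}}$ with number of iterations $T=\Theta\left(\frac{n\tilde\varepsilon\sqrt{\log m}}{\log|Q|}+\log(1/\beta)\right)$, its output is a distribution $A$ on $\widehat{\mathcal{X}}$ such that, with probability at least $1-\beta$, \[\max_{q\in Q}\left|q(A)-q(\widetilde D)\right|\le O\left(\sqrt{\frac{\log(|Q|)\cdot\left(\sqrt{\log m}+\log(1/\beta)\right)}{n\tilde\varepsilon}}+f_{\widetilde D,Q}(\widehat{\mathcal{X}})\right).\]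
   Context: For a dataset $D=(x_1,\dots,x_k)$, $q(D)=\frac1k\sum_i q(x_i)$; for a distribution $A$ on $\mathcal{X}$, $q(A)=\sum_x A(x)q(x)$. The best mixture error is $f_{\widetilde D,Q}(S)=\min_{\mu\in\Delta(S)}\max_{q\in Q}|q(\widetilde D)-\sum_{x\in S}\mu_x q(x)|$, with $\Delta(S)$ the probability distributions on $S$. The support $\widehat{\mathcal{X}}$ is the set of distinct rows of $\widehat D$. Algorithm PMW$^{\mathrm{Pub}}$ (inputs $\widetilde D,\widehat D,Q,\tilde\varepsilon,T$): let $A_0$ be the empirical distribution of $\widehat D$ on $\widehat{\mathcal{X}}$ and $\varepsilon_0=\tilde\varepsilon/\sqrt{2T}$. For $t=1,\dots,T$: (1) select $q_t\in Q$ privately with score $s_t(q)=|q(A_{t-1})-q(\widetilde D)|$, either by the exponential mechanism, $\Pr[q_t=q]\propto\exp(\frac{\varepsilon_0 n}{2}s_t(q))$, or by the permute-and-flip mechanism (go through $Q$ in uniformly random order and accept the current $q$ with probability $\exp(\frac{\varepsilon_0 n}{2}(s_t(q)-\max_{q'}s_t(q')))$, stopping at the first acceptance); (2) set $a_t=q_t(\widetilde D)+Z_t$ with $Z_t\sim\mathcal{N}(0,1/(n^2\varepsilon_0^2))$ independent, then clip $a_t$ to $[0,1]$; (3) set $A_t(x)\propto A_{t-1}(x)\exp(q_t(x)(a_t-q_t(A_{t-1}))/2)$ for $x\in\widehat{\mathcal{X}}$. Output $A=\frac1T\sum_{t=1}^T A_{t-1}$. *)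

theory Defs
  imports "HOL-Probability.Probability" "HOL-Combinatorics.Multiset_Permutations"
begin

definition qdata :: "('a \<Rightarrow> real) \<Rightarrow> 'a list \<Rightarrow> real" where
  "qdata q D = (\<Sum>x\<leftarrow>D. q x) / real (length D)"

definition qdist :: "('a \<Rightarrow> real) \<Rightarrow> 'a set \<Rightarrow> ('a \<Rightarrow> real) \<Rightarrow> real" where
  "qdist q S A = (\<Sum>x\<in>S. A x * q x)"

definition prob_simplex :: "'a set \<Rightarrow> ('a \<Rightarrow> real) set" where
  "prob_simplex S = {\<mu>. (\<forall>x\<in>S. 0 \<le> \<mu> x) \<and> (\<Sum>x\<in>S. \<mu> x) = 1}"

text \<open>Best mixture error f_{D,Q}(S) (the minimum is attained; we write the infimum).\<close>
definition best_mixture_error :: "'a list \<Rightarrow> ('a \<Rightarrow> real) set \<Rightarrow> 'a set \<Rightarrow> real" where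
  "best_mixture_error D Q S =
     (INF \<mu> \<in> prob_simplex S. Max ((\<lambda>q. \<bar>qdata q D - (\<Sum>x\<in>S. \<mu> x * q x)\<bar>) ` Q))"

definition empirical :: "'a list \<Rightarrow> 'a \<Rightarrow> real" where
  "empirical D x = real (count_list D x) / real (length D)"

definition exp_mech :: "real \<Rightarrow> 'q set \<Rightarrow> ('q \<Rightarrow> real) \<Rightarrow> 'q pmf" where
  "exp_mech c Q s = embed_pmf (\<lambda>q. if q \<in> Q then exp (c * s q) / (\<Sum>q'\<in>Q. exp (c * s q')) else 0)"

text \<open>Scan a list, accepting the current element q with probability p q
  (the default d is only returned if nothing is accepted, which cannot happen
   for permute-and-flip since the maximiser is accepted with probability 1).\<close>
fun pf_scan :: "('q \<Rightarrow> real) \<Rightarrow> 'q \<Rightarrow> 'q list \<Rightarrow> 'q pmf" where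
  "pf_scan p d [] = return_pmf d"
| "pf_scan p d (q # qs) =
     bind_pmf (bernoulli_pmf (p q)) (\<lambda>b. if b then return_pmf q else pf_scan p d qs)"

definition permute_flip :: "real \<Rightarrow> 'q set \<Rightarrow> ('q \<Rightarrow> real) \<Rightarrow> 'q pmf" where
  "permute_flip c Q s =
     bind_pmf (pmf_of_set (permutations_of_set Q))
       (\<lambda>xs. pf_scan (\<lambda>q. exp (c * (s q - Max (s ` Q)))) (SOME q. q \<in> Q) xs)"

datatype sel_mech = ExpMech | PermFlip

definition select :: "sel_mech \<Rightarrow> real \<Rightarrow> 'q set \<Rightarrow> ('q \<Rightarrow> real) \<Rightarrow> 'q pmf" where
  "select m c Q s = (case m of ExpMech \<Rightarrow> exp_mech c Q s | PermFlip \<Rightarrow> permute_flip c Q s)"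

definition clip01 :: "real \<Rightarrow> real" where
  "clip01 a = max 0 (min 1 a)"

definition mw_update :: "'a set \<Rightarrow> ('a \<Rightarrow> real) \<Rightarrow> ('a \<Rightarrow> real) \<Rightarrow> real \<Rightarrow> 'a \<Rightarrow> real" where
  "mw_update S A q a =
     (\<lambda>x. A x * exp (q x * (a - qdist q S A) / 2) /
          (\<Sum>y\<in>S. A y * exp (q y * (a - qdist q S A) / 2)))"

definition gauss :: "real \<Rightarrow> real measure" where
  "gauss \<sigma> = density lborel (normal_density 0 \<sigma>)"

text \<open>pmw_succ mech D S Q e0 E k A hist: probability that the predicate E holds of the
  final history [A_0,...,A_{T-1}], when k iterations remain, the current
  distribution is A and hist = [A_0,...,A_{t-1}] are the previous ones.
  D is the private dataset (n = length D), e0 = eps0.\<close>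
fun pmw_succ :: "sel_mech \<Rightarrow> 'a list \<Rightarrow> 'a set \<Rightarrow> ('a \<Rightarrow> real) set \<Rightarrow> real
    \<Rightarrow> (('a \<Rightarrow> real) list \<Rightarrow> bool) \<Rightarrow> nat \<Rightarrow> ('a \<Rightarrow> real) \<Rightarrow> ('a \<Rightarrow> real) list \<Rightarrow> ennreal" where
  "pmw_succ mech D S Q e0 E 0 A hist = (if E hist then 1 else 0)"
| "pmw_succ mech D S Q e0 E (Suc k) A hist =
     (\<integral>\<^sup>+ q. (\<integral>\<^sup>+ z. pmw_succ mech D S Q e0 E k
                          (mw_update S A q (clip01 (qdata q D + z))) (hist @ [A])
               \<partial>gauss (1 / (real (length D) * e0)))
      \<partial>measure_pmf (select mech (e0 * real (length D) / 2) Q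
                       (\<lambda>q. \<bar>qdist q S A - qdata q D\<bar>)))"

text \<open>Probability that the output A = (1/T) sum_{t=1}^T A_{t-1} of PMW^Pub satisfies P.\<close>
definition pmw_pub_prob :: "sel_mech \<Rightarrow> 'a list \<Rightarrow> 'a list \<Rightarrow> ('a \<Rightarrow> real) set \<Rightarrow> real \<Rightarrow> nat
    \<Rightarrow> (('a \<Rightarrow> real) \<Rightarrow> bool) \<Rightarrow> ennreal" where
  "pmw_pub_prob mech Dpriv Dpub Q eps T P =
     pmw_succ mech Dpriv (set Dpub) Q (eps / sqrt (2 * real T))
       (\<lambda>hist. P (\<lambda>x. (\<Sum>B\<leftarrow>hist. B x) / real T)) T (empirical Dpub) []"

end

theory Submission
  imports Defs
begin

text \<open>Fix a mixture \<mu> on the public support whose answers are within f + R of the private ones,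
  where f is the best mixture error and R the claimed rate. The multiplicative-weights step lowers the
  cross entropy H(\<mu>, A) by about the error of A on the selected query, up to the penalty
  a = 1/(4 \<rho>) + 6 \<rho> (f + R)^2 and the squared noise. Hence the potential
  (sum of the past errors) + 8 \<rho> H(\<mu>, A) + (remaining rounds) * a can only grow through the score gap
  of the selected query and the squared Gaussian noise. Both selection mechanisms pick a query with
  score gap g with probability at most exp (- c g), and E exp (b z^2) <= sqrt 2 for small b, so
  exp (\<eta> * potential) grows in expectation by a factor at most sqrt 2 * |Q| per round; this
  supermartingale bound is proved by backward induction over the rounds. As H(\<mu>, A_0) <= ln m for the
  empirical distribution A_0, with probability 1 - \<beta> the mean error of the iterates, which bounds the
  error of their average, is at most a + (8 \<rho> ln m + (T ln (sqrt 2 |Q|) + ln (1/\<beta>)) / \<eta>) / T, and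
  the choice of T, \<eta> and \<rho> makes this O(R + f). A single public row, and the regime
  n \<epsilon> < 5 ln |Q| in which R exceeds the trivial bound 1, are handled directly.\<close>

lemma pf_scan_pmf_le:
  assumes "distinct xs" and "\<forall>x\<in>set xs. 0 \<le> p x \<and> p x \<le> 1" and "\<exists>x\<in>set xs. p x = 1"
  shows "pmf (pf_scan p d xs) q \<le> (if q \<in> set xs then p q else 0)"
  using assms
proof (induction xs)
  case Nil
  then show ?case by simp
next
  case (Cons x xs)
  have px: "0 \<le> p x" "p x \<le> 1" using Cons.prems(2) by auto
  show ?case
  proof (cases "p x = 1")
    case True
    then show ?thesis using Cons.prems(2) by (auto simp: pmf_bind indicator_def)
  next
    case False
    then have IH: "pmf (pf_scan p d xs) q \<le> (if q \<in> set xs then p q else 0)"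
      using Cons by auto
    have step: "pmf (pf_scan p d (x # xs)) q = indicator {x} q * p x + pmf (pf_scan p d xs) q * (1 - p x)"
      using px by (simp add: pmf_bind indicator_def)
    show ?thesis
    proof (cases "q = x")
      case True
      then have "pmf (pf_scan p d xs) q = 0"
        using IH Cons.prems(1) by (metis distinct.simps(2) pmf_nonneg order_antisym)
      then show ?thesis using step True by simp
    next
      case False
      have "pmf (pf_scan p d xs) q * (1 - p x) \<le> (if q \<in> set xs then p q else 0) * 1"
        using IH px Cons.prems(2) by (intro mult_mono) auto
      then show ?thesis using step False by auto
    qed
  qed
qed

lemma exp_mech_pmf_le:
  assumes "finite Q" "Q \<noteq> {}" "0 < c"
  shows "pmf (exp_mech c Q s) q \<le> (if q \<in> Q then exp (c * (s q - Max (s ` Q))) else 0)"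
proof -
  define Z where "Z = (\<Sum>q'\<in>Q. exp (c * s q'))"
  define g where "g = (\<lambda>q. if q \<in> Q then exp (c * s q) / Z else 0)"
  have Z_pos: "0 < Z" unfolding Z_def using assms by (intro sum_pos) auto
  have g_nonneg: "\<And>x. 0 \<le> g x" unfolding g_def using Z_pos by auto
  have "(\<integral>\<^sup>+x. ennreal (g x) \<partial>count_space UNIV) = (\<Sum>x\<in>Q. ennreal (g x))"
    using assms by (intro nn_integral_count_space') (auto simp: g_def)
  also have "\<dots> = ennreal (\<Sum>x\<in>Q. g x)" using g_nonneg by simp
  also have "(\<Sum>x\<in>Q. g x) = 1"
    unfolding g_def using Z_pos by (simp add: Z_def sum_divide_distrib[symmetric])
  finally have "pmf (exp_mech c Q s) q = g q"
    unfolding exp_mech_def g_def[symmetric] Z_def[symmetric] using g_nonneg by (simp add: pmf_embed_pmf)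
  moreover have "exp (c * s q) / Z \<le> exp (c * (s q - Max (s ` Q)))" if "q \<in> Q"
  proof -
    have "Max (s ` Q) \<in> s ` Q" using assms by simp
    then obtain q0 where q0: "q0 \<in> Q" "Max (s ` Q) = s q0" by auto
    have "exp (c * Max (s ` Q)) \<le> Z"
      unfolding Z_def q0(2) using assms q0(1) by (intro member_le_sum) auto
    then have "exp (c * s q) / Z \<le> exp (c * s q) / exp (c * Max (s ` Q))"
      using Z_pos by (intro divide_left_mono) auto
    also have "\<dots> = exp (c * (s q - Max (s ` Q)))"
      by (simp add: exp_diff right_diff_distrib)
    finally show ?thesis .
  qed
  ultimately show ?thesis by (simp add: g_def)
qed

lemma permute_flip_pmf_le:
  assumes "finite Q" "Q \<noteq> {}" "0 < c"
  shows "pmf (permute_flip c Q s) q \<le> (if q \<in> Q then exp (c * (s q - Max (s ` Q))) else 0)"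
proof -
  define p where "p = (\<lambda>q. exp (c * (s q - Max (s ` Q))))"
  have scan_le: "pmf (pf_scan p (SOME q. q \<in> Q) xs) q \<le> (if q \<in> Q then exp (c * (s q - Max (s ` Q))) else 0)"
    if xs: "xs \<in> permutations_of_set Q" for xs
  proof -
    have xs_Q: "set xs = Q" "distinct xs" using permutations_of_setD[OF xs] by auto
    have "s x \<le> Max (s ` Q)" if "x \<in> Q" for x using assms that by simp
    then have "\<forall>x\<in>set xs. 0 \<le> p x \<and> p x \<le> 1"
      unfolding p_def xs_Q using assms by (auto simp: mult_nonneg_nonpos)
    moreover have "Max (s ` Q) \<in> s ` Q" using assms by simp
    then have "\<exists>x\<in>set xs. p x = 1" unfolding p_def xs_Q by auto
    ultimately have "pmf (pf_scan p (SOME q. q \<in> Q) xs) q \<le> (if q \<in> set xs then p q else 0)"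
      by (rule pf_scan_pmf_le[OF xs_Q(2)])
    then show ?thesis unfolding p_def xs_Q .
  qed
  have "pmf (permute_flip c Q s) q
      = measure_pmf.expectation (pmf_of_set (permutations_of_set Q)) (\<lambda>xs. pmf (pf_scan p (SOME q. q \<in> Q) xs) q)"
    unfolding permute_flip_def p_def by (simp add: pmf_bind)
  also have "\<dots> \<le> (if q \<in> Q then exp (c * (s q - Max (s ` Q))) else 0)"
    using assms scan_le
    by (intro measure_pmf.integral_le_const integrable_measure_pmf_finite) (auto simp: AE_measure_pmf_iff)
  finally show ?thesis .
qed

lemma select_pmf_le:
  assumes "finite Q" "Q \<noteq> {}" "0 < c"
  shows "pmf (select mech c Q s) q \<le> (if q \<in> Q then exp (c * (s q - Max (s ` Q))) else 0)"
  using exp_mech_pmf_le[OF assms] permute_flip_pmf_le[OF assms]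
  by (cases mech) (auto simp: select_def)

lemma set_pmf_select_subset:
  assumes "finite Q" "Q \<noteq> {}" "0 < c"
  shows "set_pmf (select mech c Q s) \<subseteq> Q"
proof
  fix q assume "q \<in> set_pmf (select mech c Q s)"
  then have "0 < pmf (select mech c Q s) q" by (simp add: pmf_positive)
  then show "q \<in> Q" using select_pmf_le[OF assms, of mech s q] by (auto split: if_splits)
qed

lemma nn_integral_select_exp_gap_le:
  assumes "finite Q" "Q \<noteq> {}" "0 < c" "0 \<le> \<eta>" "\<eta> \<le> c"
  shows "(\<integral>\<^sup>+q. ennreal (exp (\<eta> * (Max (s ` Q) - s q))) \<partial>measure_pmf (select mech c Q s)) \<le> card Q"
proof -
  have "ennreal (pmf (select mech c Q s) q) * ennreal (exp (\<eta> * (Max (s ` Q) - s q))) \<le> indicator Q q"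
    for q
  proof (cases "q \<in> Q")
    case True
    have gap: "0 \<le> Max (s ` Q) - s q" using assms True by auto
    have "pmf (select mech c Q s) q * exp (\<eta> * (Max (s ` Q) - s q))
        \<le> exp (c * (s q - Max (s ` Q))) * exp (\<eta> * (Max (s ` Q) - s q))"
      using select_pmf_le[OF assms(1-3), of mech s q] True by (intro mult_right_mono) auto
    also have "\<dots> = exp ((\<eta> - c) * (Max (s ` Q) - s q))"
      by (simp add: exp_add[symmetric] algebra_simps)
    also have "\<dots> \<le> 1" using gap assms by (auto simp: mult_nonpos_nonneg)
    finally show ?thesis using True by (simp add: ennreal_mult[symmetric] ennreal_leI)
  next
    case False
    then have "pmf (select mech c Q s) q = 0"
      using select_pmf_le[OF assms(1-3), of mech s q] by (metis pmf_nonneg order_antisym)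
    then show ?thesis by simp
  qed
  then have "(\<integral>\<^sup>+q. ennreal (exp (\<eta> * (Max (s ` Q) - s q))) \<partial>measure_pmf (select mech c Q s))
      \<le> (\<integral>\<^sup>+q. indicator Q q \<partial>count_space UNIV)"
    by (subst nn_integral_measure_pmf) (intro nn_integral_mono)
  also have "\<dots> = card Q" using assms(1) by simp
  finally show ?thesis .
qed

lemma prob_space_gauss: "0 < \<sigma> \<Longrightarrow> prob_space (gauss \<sigma>)"
  unfolding gauss_def by (rule prob_space_normal_density)

lemma sets_gauss [measurable_cong]: "sets (gauss \<sigma>) = sets borel"
  unfolding gauss_def by simp

lemma normal_density_mult_exp_sq:
  assumes "0 < \<sigma>"
  shows "normal_density 0 \<sigma> z * exp (z\<^sup>2 / (4 * \<sigma>\<^sup>2)) = sqrt 2 * normal_density 0 (sqrt 2 * \<sigma>) z"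
proof -
  have "exp (- (z\<^sup>2) / (2 * \<sigma>\<^sup>2)) * exp (z\<^sup>2 / (4 * \<sigma>\<^sup>2)) = exp (- (z\<^sup>2) / (2 * (sqrt 2 * \<sigma>)\<^sup>2))"
    unfolding exp_add[symmetric] using assms by (simp add: power_mult_distrib field_simps)
  moreover have "sqrt (2 * pi * (sqrt 2 * \<sigma>)\<^sup>2) = sqrt 2 * sqrt (2 * pi * \<sigma>\<^sup>2)"
    by (simp add: power_mult_distrib real_sqrt_mult[symmetric] algebra_simps)
  ultimately show ?thesis unfolding normal_density_def by (simp add: field_simps)
qed

lemma nn_integral_gauss_exp_sq_le:
  assumes "0 < \<sigma>" "0 \<le> b" "b \<le> 1 / (4 * \<sigma>\<^sup>2)"
  shows "(\<integral>\<^sup>+z. ennreal (exp (b * z\<^sup>2)) \<partial>gauss \<sigma>) \<le> sqrt 2"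
proof -
  have "(\<integral>\<^sup>+z. ennreal (exp (b * z\<^sup>2)) \<partial>gauss \<sigma>)
      = (\<integral>\<^sup>+z. ennreal (normal_density 0 \<sigma> z) * ennreal (exp (b * z\<^sup>2)) \<partial>lborel)"
    unfolding gauss_def by (subst nn_integral_density) auto
  also have "\<dots> \<le> (\<integral>\<^sup>+z. ennreal (sqrt 2) * ennreal (normal_density 0 (sqrt 2 * \<sigma>) z) \<partial>lborel)"
  proof (intro nn_integral_mono)
    fix z :: real
    have "b * z\<^sup>2 \<le> z\<^sup>2 / (4 * \<sigma>\<^sup>2)"
      using assms mult_right_mono[OF assms(3), of "z\<^sup>2"] by simp
    then have "normal_density 0 \<sigma> z * exp (b * z\<^sup>2) \<le> normal_density 0 \<sigma> z * exp (z\<^sup>2 / (4 * \<sigma>\<^sup>2))"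
      by (intro mult_left_mono) auto
    then show "ennreal (normal_density 0 \<sigma> z) * ennreal (exp (b * z\<^sup>2))
        \<le> ennreal (sqrt 2) * ennreal (normal_density 0 (sqrt 2 * \<sigma>) z)"
      unfolding normal_density_mult_exp_sq[OF assms(1)] by (simp add: ennreal_mult[symmetric] ennreal_leI)
  qed
  also have "\<dots> = ennreal (sqrt 2) * (\<integral>\<^sup>+z. ennreal (normal_density 0 (sqrt 2 * \<sigma>) z) \<partial>lborel)"
    by (rule nn_integral_cmult) simp
  also have "(\<integral>\<^sup>+z. ennreal (normal_density 0 (sqrt 2 * \<sigma>) z) \<partial>lborel) = 1"
    using prob_space.emeasure_space_1[OF prob_space_normal_density[of "sqrt 2 * \<sigma>" 0]] assms
    by (simp add: emeasure_density)
  finally show ?thesis by simp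
qed

lemma nn_integral_one_minus_ge:
  assumes "prob_space N" "f \<in> borel_measurable N" "\<And>x. 0 \<le> f x"
    and "(\<integral>\<^sup>+x. ennreal (f x) \<partial>N) \<le> ennreal B" "0 \<le> B"
  shows "ennreal (1 - B) \<le> (\<integral>\<^sup>+x. ennreal (1 - f x) \<partial>N)"
proof -
  interpret prob_space N by fact
  have split_one: "1 \<le> ennreal (1 - f x) + ennreal (f x)" for x
  proof (cases "f x \<le> 1")
    case True
    then show ?thesis using assms(3)[of x] by (subst ennreal_plus[symmetric]) auto
  next
    case False
    then show ?thesis by (metis add_increasing ennreal_ge_1 linorder_not_le order_less_imp_le zero_le)
  qed
  have "1 = (\<integral>\<^sup>+x. 1 \<partial>N)" by (simp add: emeasure_space_1)
  also have "\<dots> \<le> (\<integral>\<^sup>+x. ennreal (1 - f x) + ennreal (f x) \<partial>N)"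
    by (intro nn_integral_mono split_one)
  also have "\<dots> = (\<integral>\<^sup>+x. ennreal (1 - f x) \<partial>N) + (\<integral>\<^sup>+x. ennreal (f x) \<partial>N)"
    using assms(2) by (intro nn_integral_add) auto
  also have "\<dots> \<le> (\<integral>\<^sup>+x. ennreal (1 - f x) \<partial>N) + ennreal B"
    using assms(4) by (intro add_left_mono)
  finally have "1 \<le> (\<integral>\<^sup>+x. ennreal (1 - f x) \<partial>N) + ennreal B" .
  then show ?thesis
    using assms(5) by (cases "B \<le> 1") (auto simp: ennreal_minus[symmetric] ennreal_minus_le_iff add.commute ennreal_neg)
qed

lemma select_gauss_one_minus_ge:
  assumes Q: "finite Q" "Q \<noteq> {}" and c: "0 < c" "0 \<le> \<eta>" "\<eta> \<le> c"
    and \<sigma>: "0 < \<sigma>" "0 \<le> b" "b \<le> 1 / (4 * \<sigma>\<^sup>2)" and W: "0 \<le> W"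
    and F: "\<And>q z. q \<in> Q \<Longrightarrow> ennreal (1 - W * exp (\<eta> * (Max (s ` Q) - s q)) * exp (b * z\<^sup>2)) \<le> F q z"
  shows "ennreal (1 - W * sqrt 2 * card Q)
    \<le> (\<integral>\<^sup>+q. (\<integral>\<^sup>+z. F q z \<partial>gauss \<sigma>) \<partial>measure_pmf (select mech c Q s))"
proof -
  have "ennreal (1 - W * sqrt 2 * card Q)
      \<le> (\<integral>\<^sup>+q. ennreal (1 - W * sqrt 2 * exp (\<eta> * (Max (s ` Q) - s q))) \<partial>measure_pmf (select mech c Q s))"
  proof (rule nn_integral_one_minus_ge)
    have "(\<integral>\<^sup>+q. ennreal (W * sqrt 2 * exp (\<eta> * (Max (s ` Q) - s q))) \<partial>measure_pmf (select mech c Q s))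
        = ennreal (W * sqrt 2) * (\<integral>\<^sup>+q. ennreal (exp (\<eta> * (Max (s ` Q) - s q))) \<partial>measure_pmf (select mech c Q s))"
      using W by (simp add: ennreal_mult nn_integral_cmult)
    also have "\<dots> \<le> ennreal (W * sqrt 2) * card Q"
      by (intro mult_left_mono nn_integral_select_exp_gap_le Q c) auto
    finally show "(\<integral>\<^sup>+q. ennreal (W * sqrt 2 * exp (\<eta> * (Max (s ` Q) - s q))) \<partial>measure_pmf (select mech c Q s))
        \<le> ennreal (W * sqrt 2 * card Q)"
      using W by (simp add: ennreal_mult ennreal_of_nat_eq_real_of_nat)
  qed (use W in \<open>auto intro: measure_pmf.prob_space_axioms\<close>)
  also have "\<dots> \<le> (\<integral>\<^sup>+q. (\<integral>\<^sup>+z. F q z \<partial>gauss \<sigma>) \<partial>measure_pmf (select mech c Q s))"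
  proof (intro nn_integral_mono_AE AE_pmfI)
    fix q assume "q \<in> set_pmf (select mech c Q s)"
    then have q: "q \<in> Q" using set_pmf_select_subset[OF Q c(1)] by blast
    define w where "w = W * exp (\<eta> * (Max (s ` Q) - s q))"
    have w: "0 \<le> w" unfolding w_def using W by simp
    have "ennreal (1 - w * sqrt 2) \<le> (\<integral>\<^sup>+z. ennreal (1 - w * exp (b * z\<^sup>2)) \<partial>gauss \<sigma>)"
    proof (rule nn_integral_one_minus_ge)
      have "(\<integral>\<^sup>+z. ennreal (w * exp (b * z\<^sup>2)) \<partial>gauss \<sigma>) = ennreal w * (\<integral>\<^sup>+z. ennreal (exp (b * z\<^sup>2)) \<partial>gauss \<sigma>)"
        using w by (simp add: ennreal_mult nn_integral_cmult)
      also have "\<dots> \<le> ennreal w * ennreal (sqrt 2)"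
        by (intro mult_left_mono nn_integral_gauss_exp_sq_le \<sigma>) auto
      finally show "(\<integral>\<^sup>+z. ennreal (w * exp (b * z\<^sup>2)) \<partial>gauss \<sigma>) \<le> ennreal (w * sqrt 2)"
        using w by (simp add: ennreal_mult)
    qed (use w \<sigma> in \<open>auto intro: prob_space_gauss\<close>)
    also have "\<dots> \<le> (\<integral>\<^sup>+z. F q z \<partial>gauss \<sigma>)"
      using F[OF q] unfolding w_def by (intro nn_integral_mono) auto
    finally show "ennreal (1 - W * sqrt 2 * exp (\<eta> * (Max (s ` Q) - s q))) \<le> (\<integral>\<^sup>+z. F q z \<partial>gauss \<sigma>)"
      unfolding w_def by (simp add: mult_ac)
  qed
  finally show ?thesis .
qed

definition positive_dist :: "'a set \<Rightarrow> ('a \<Rightarrow> real) \<Rightarrow> bool" where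
  "positive_dist S A \<longleftrightarrow> (\<forall>x\<in>S. 0 < A x) \<and> (\<Sum>x\<in>S. A x) = 1 \<and> (\<forall>x. x \<notin> S \<longrightarrow> A x = 0)"

definition cross_entropy :: "'a set \<Rightarrow> ('a \<Rightarrow> real) \<Rightarrow> ('a \<Rightarrow> real) \<Rightarrow> real" where
  "cross_entropy S \<mu> A = - (\<Sum>x\<in>S. \<mu> x * ln (A x))"

lemma positive_dist_imp_prob_simplex: "positive_dist S A \<Longrightarrow> A \<in> prob_simplex S"
  by (auto simp: positive_dist_def prob_simplex_def less_imp_le)

lemma positive_dist_le_one:
  assumes "positive_dist S A" "finite S" "x \<in> S"
  shows "A x \<le> 1"
proof -
  have "A x \<le> (\<Sum>y\<in>S. A y)"
    using assms by (intro member_le_sum) (auto simp: positive_dist_def less_imp_le)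
  then show ?thesis using assms by (simp add: positive_dist_def)
qed

lemma positive_dist_mw_update:
  assumes "finite S" "S \<noteq> {}" "positive_dist S A"
  shows "positive_dist S (mw_update S A q a)"
proof -
  define Z where "Z = (\<Sum>y\<in>S. A y * exp (q y * (a - qdist q S A) / 2))"
  have "0 < Z" unfolding Z_def using assms by (intro sum_pos) (auto simp: positive_dist_def)
  then show ?thesis
    using assms unfolding mw_update_def Z_def[symmetric] positive_dist_def
    by (auto simp: sum_divide_distrib[symmetric] Z_def)
qed

lemma qdist_nonneg:
  assumes "positive_dist S A" "\<forall>x\<in>S. 0 \<le> q x"
  shows "0 \<le> qdist q S A"
  unfolding qdist_def using assms by (intro sum_nonneg mult_nonneg_nonneg) (auto simp: positive_dist_def less_imp_le)

lemma qdist_le_one: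
  assumes "positive_dist S A" "\<forall>x\<in>S. q x \<le> 1"
  shows "qdist q S A \<le> 1"
proof -
  have "qdist q S A \<le> (\<Sum>x\<in>S. A x * 1)"
    unfolding qdist_def using assms by (intro sum_mono mult_left_mono) (auto simp: positive_dist_def less_imp_le)
  then show ?thesis using assms by (simp add: positive_dist_def)
qed

lemma cross_entropy_nonneg:
  assumes "positive_dist S A" "finite S" "\<forall>x\<in>S. 0 \<le> \<mu> x"
  shows "0 \<le> cross_entropy S \<mu> A"
proof -
  have "\<mu> x * ln (A x) \<le> 0" if "x \<in> S" for x
    using assms that positive_dist_le_one[OF assms(1,2) that]
    by (intro mult_nonneg_nonpos) (auto simp: positive_dist_def)
  then show ?thesis unfolding cross_entropy_def by (simp add: sum_nonpos)
qed

lemma cross_entropy_mw_update: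
  fixes q :: "'a \<Rightarrow> real" and a :: real
  assumes "finite S" "S \<noteq> {}" "positive_dist S A" "(\<Sum>x\<in>S. \<mu> x) = 1"
  defines "r \<equiv> a - qdist q S A"
  shows "cross_entropy S \<mu> A - cross_entropy S \<mu> (mw_update S A q a)
    = r / 2 * qdist q S \<mu> - ln (\<Sum>y\<in>S. A y * exp (q y * r / 2))"
proof -
  define Z where "Z = (\<Sum>y\<in>S. A y * exp (q y * r / 2))"
  have Z_pos: "0 < Z" unfolding Z_def using assms by (intro sum_pos) (auto simp: positive_dist_def)
  have "ln (mw_update S A q a x) = ln (A x) + q x * r / 2 - ln Z" if "x \<in> S" for x
  proof -
    have "0 < A x" using that assms(3) by (simp add: positive_dist_def)
    then show ?thesis using Z_pos by (simp add: mw_update_def Z_def r_def ln_div ln_mult)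
  qed
  then have "(\<Sum>x\<in>S. \<mu> x * ln (mw_update S A q a x))
      = (\<Sum>x\<in>S. \<mu> x * ln (A x) + \<mu> x * (q x * r / 2) - \<mu> x * ln Z)"
    by (intro sum.cong refl) (simp add: right_diff_distrib distrib_left)
  then have "cross_entropy S \<mu> (mw_update S A q a)
      = cross_entropy S \<mu> A - (\<Sum>x\<in>S. \<mu> x * (q x * r / 2)) + (\<Sum>x\<in>S. \<mu> x) * ln Z"
    unfolding cross_entropy_def by (simp add: sum.distrib sum_subtractf sum_distrib_right)
  also have "(\<Sum>x\<in>S. \<mu> x * (q x * r / 2)) = r / 2 * qdist q S \<mu>"
    unfolding qdist_def by (simp add: sum_distrib_left algebra_simps)
  finally show ?thesis using assms(4) by (simp add: Z_def)
qed

lemma exp_le_quadratic: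
  fixes y :: real
  assumes "\<bar>y\<bar> \<le> 1"
  shows "exp y \<le> 1 + y + y\<^sup>2"
proof (cases "0 \<le> y")
  case True
  then show ?thesis using assms exp_bound by auto
next
  case False
  define t where "t = - y"
  have t: "0 < t" "t \<le> 1" using False assms by (auto simp: t_def)
  have "exp y = 1 / exp t" by (simp add: t_def exp_minus field_simps)
  also have "\<dots> \<le> 1 / (1 + t)" using t by (intro divide_left_mono exp_ge_add_one_self) auto
  also have "\<dots> \<le> 1 - t + t\<^sup>2"
  proof -
    have "1 \<le> (1 + t) * (1 - t + t\<^sup>2)" using t by (simp add: algebra_simps power2_eq_square power3_eq_cube)
    then show ?thesis using t by (simp add: divide_simps mult.commute)
  qed
  finally show ?thesis by (simp add: t_def)
qed

lemma ln_mw_normaliser_le: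
  assumes "finite S" "positive_dist S A" "\<forall>x\<in>S. 0 \<le> q x \<and> q x \<le> 1" "\<bar>r\<bar> \<le> 1" "S \<noteq> {}"
  shows "ln (\<Sum>y\<in>S. A y * exp (q y * r / 2)) \<le> r / 2 * qdist q S A + r\<^sup>2 / 4"
proof -
  have "A y * exp (q y * r / 2) \<le> A y * (1 + r / 2 * q y + r\<^sup>2 / 4)" if y: "y \<in> S" for y
  proof -
    have qy: "0 \<le> q y" "q y \<le> 1" using assms(3) y by auto
    have "\<bar>q y * r / 2\<bar> \<le> 1"
      using qy assms(4) by (auto simp: abs_mult intro: order_trans[OF mult_left_le_one_le])
    then have "exp (q y * r / 2) \<le> 1 + q y * r / 2 + (q y * r / 2)\<^sup>2" by (rule exp_le_quadratic)
    also have "(q y * r / 2)\<^sup>2 \<le> r\<^sup>2 / 4"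
      using mult_right_mono[OF power_le_one[OF qy, of 2], of "r\<^sup>2"]
      by (simp add: power_mult_distrib power_divide)
    finally show ?thesis
      using assms(2) y by (intro mult_left_mono) (auto simp: positive_dist_def algebra_simps)
  qed
  then have "(\<Sum>y\<in>S. A y * exp (q y * r / 2)) \<le> (\<Sum>y\<in>S. A y * (1 + r / 2 * q y + r\<^sup>2 / 4))"
    by (intro sum_mono)
  also have "\<dots> = 1 + r / 2 * qdist q S A + r\<^sup>2 / 4"
    using assms(2) unfolding qdist_def positive_dist_def
    by (simp add: algebra_simps sum.distrib sum_distrib_left sum_distrib_right[symmetric])
  finally have "(\<Sum>y\<in>S. A y * exp (q y * r / 2)) \<le> 1 + r / 2 * qdist q S A + r\<^sup>2 / 4" .
  moreover have "0 < (\<Sum>y\<in>S. A y * exp (q y * r / 2))"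
    using assms(1,2,5) by (intro sum_pos) (auto simp: positive_dist_def)
  ultimately show ?thesis using ln_le_minus_one[of "\<Sum>y\<in>S. A y * exp (q y * r / 2)"] by linarith
qed

lemma clip01_nonneg: "0 \<le> clip01 a"
  and clip01_le_one: "clip01 a \<le> 1"
  by (auto simp: clip01_def)

lemma abs_clip01_add_diff_le:
  assumes "0 \<le> c" "c \<le> 1"
  shows "\<bar>clip01 (c + z) - c\<bar> \<le> \<bar>z\<bar>"
  using assms by (auto simp: clip01_def)

text \<open>In the application, d is the error of the current distribution on the selected query, w the
  clipped noise and \<delta> the error of the comparison mixture \<mu>, so that d + w is the step size of the
  update and the bracket is the lower bound on the drop of the cross entropy to \<mu>.\<close>

lemma abs_le_mw_drop_bound:
  fixes d w \<delta> f \<rho> :: real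
  assumes "0 < \<rho>" "\<bar>\<delta>\<bar> \<le> f"
  shows "\<bar>d\<bar> - (1 / (4 * \<rho>) + 6 * \<rho> * f\<^sup>2) - 8 * \<rho> * ((d + w) / 2 * (d + \<delta>) - (d + w)\<^sup>2 / 4)
    \<le> 4 * \<rho> * w\<^sup>2"
proof -
  have "4 * \<rho> * \<bar>d\<bar> - 1 \<le> 4 * \<rho> * (\<rho> * d\<^sup>2)"
    using zero_le_power2[of "2 * \<rho> * \<bar>d\<bar> - 1"] by (simp add: power2_eq_square algebra_simps)
  then have "\<bar>d\<bar> - 1 / (4 * \<rho>) \<le> \<rho> * d\<^sup>2" using assms(1) by (simp add: field_simps)
  moreover have "- 4 * \<rho> * d * \<delta> \<le> \<rho> * d\<^sup>2 + 4 * \<rho> * \<delta>\<^sup>2"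
    using mult_nonneg_nonneg[OF less_imp_le[OF assms(1)] zero_le_power2[of "d + 2 * \<delta>"]]
    by (simp add: power2_eq_square algebra_simps)
  moreover have "- 4 * \<rho> * w * \<delta> \<le> 2 * \<rho> * w\<^sup>2 + 2 * \<rho> * \<delta>\<^sup>2"
    using mult_nonneg_nonneg[OF less_imp_le[OF assms(1)] zero_le_power2[of "w + \<delta>"]]
    by (simp add: power2_eq_square algebra_simps)
  moreover have "6 * \<rho> * \<delta>\<^sup>2 \<le> 6 * \<rho> * f\<^sup>2"
    using assms power_mono[OF assms(2) abs_ge_zero, of 2] by simp
  moreover have "8 * \<rho> * ((d + w) / 2 * (d + \<delta>) - (d + w)\<^sup>2 / 4)
      = 2 * \<rho> * d\<^sup>2 + 4 * \<rho> * d * \<delta> + 4 * \<rho> * w * \<delta> - 2 * \<rho> * w\<^sup>2"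
    by (simp add: power2_eq_square field_simps)
  ultimately show ?thesis by linarith
qed

lemma abs_err_le_cross_entropy_drop:
  assumes S: "finite S" "S \<noteq> {}" and A: "positive_dist S A" and q: "\<forall>x\<in>S. 0 \<le> q x \<and> q x \<le> 1"
    and qD: "0 \<le> qdata q D" "qdata q D \<le> 1"
    and \<mu>: "(\<Sum>x\<in>S. \<mu> x) = 1" "\<bar>qdist q S \<mu> - qdata q D\<bar> \<le> f" and \<rho>: "0 < \<rho>"
  shows "\<bar>qdist q S A - qdata q D\<bar> - (1 / (4 * \<rho>) + 6 * \<rho> * f\<^sup>2)
      - 8 * \<rho> * (cross_entropy S \<mu> A - cross_entropy S \<mu> (mw_update S A q (clip01 (qdata q D + z))))
    \<le> 4 * \<rho> * z\<^sup>2"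
proof -
  define a where "a = clip01 (qdata q D + z)"
  define d where "d = qdata q D - qdist q S A"
  define w where "w = a - qdata q D"
  define \<delta> where "\<delta> = qdist q S \<mu> - qdata q D"
  define r where "r = d + w"
  have "0 \<le> qdist q S A" "qdist q S A \<le> 1"
    using qdist_nonneg[OF A] qdist_le_one[OF A] q by auto
  then have "\<bar>r\<bar> \<le> 1"
    unfolding r_def d_def w_def a_def using clip01_nonneg[of "qdata q D + z"] clip01_le_one[of "qdata q D + z"]
    by (auto simp: abs_le_iff)
  then have "ln (\<Sum>y\<in>S. A y * exp (q y * r / 2)) \<le> r / 2 * qdist q S A + r\<^sup>2 / 4"
    using ln_mw_normaliser_le[OF S(1) A q] S(2) by blast
  moreover have "cross_entropy S \<mu> A - cross_entropy S \<mu> (mw_update S A q a)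
      = r / 2 * qdist q S \<mu> - ln (\<Sum>y\<in>S. A y * exp (q y * r / 2))"
    using cross_entropy_mw_update[OF S A \<mu>(1), of q a] unfolding r_def d_def w_def by simp
  moreover have "r / 2 * (d + \<delta>) = r / 2 * qdist q S \<mu> - r / 2 * qdist q S A"
    unfolding d_def \<delta>_def by (simp add: algebra_simps)
  ultimately have "r / 2 * (d + \<delta>) - r\<^sup>2 / 4 \<le> cross_entropy S \<mu> A - cross_entropy S \<mu> (mw_update S A q a)"
    by linarith
  then have "8 * \<rho> * ((d + w) / 2 * (d + \<delta>) - (d + w)\<^sup>2 / 4)
      \<le> 8 * \<rho> * (cross_entropy S \<mu> A - cross_entropy S \<mu> (mw_update S A q a))"
    using \<rho> unfolding r_def by simp
  moreover have "4 * \<rho> * w\<^sup>2 \<le> 4 * \<rho> * z\<^sup>2"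
    using abs_clip01_add_diff_le[OF qD, of z] \<rho> unfolding w_def a_def
    by (simp add: abs_le_square_iff)
  moreover have "\<bar>qdist q S A - qdata q D\<bar> = \<bar>d\<bar>" unfolding d_def by simp
  ultimately show ?thesis
    using abs_le_mw_drop_bound[OF \<rho>, of \<delta> f d w] \<mu>(2) unfolding a_def \<delta>_def by linarith
qed

definition max_err :: "'a list \<Rightarrow> 'a set \<Rightarrow> ('a \<Rightarrow> real) set \<Rightarrow> ('a \<Rightarrow> real) \<Rightarrow> real" where
  "max_err D S Q A = Max ((\<lambda>q. \<bar>qdist q S A - qdata q D\<bar>) ` Q)"

lemma pmw_succ_Suc_ge:
  fixes D :: "'a list" and S :: "'a set" and A :: "'a \<Rightarrow> real"
  defines "s \<equiv> \<lambda>q. \<bar>qdist q S A - qdata q D\<bar>"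
  assumes Q: "finite Q" "Q \<noteq> {}" and D: "D \<noteq> []" and e0: "0 < e0"
    and \<eta>: "0 \<le> \<eta>" "\<eta> \<le> e0 * real (length D) / 2"
    and b: "0 \<le> b" "b \<le> (real (length D) * e0)\<^sup>2 / 4" and W: "0 \<le> W"
    and round: "\<And>q z. q \<in> Q \<Longrightarrow> ennreal (1 - W * exp (\<eta> * (Max (s ` Q) - s q)) * exp (b * z\<^sup>2))
      \<le> pmw_succ mech D S Q e0 E k (mw_update S A q (clip01 (qdata q D + z))) (hist @ [A])"
  shows "ennreal (1 - W * sqrt 2 * card Q) \<le> pmw_succ mech D S Q e0 E (Suc k) A hist"
proof -
  have "ennreal (1 - W * sqrt 2 * card Q)
      \<le> (\<integral>\<^sup>+q. (\<integral>\<^sup>+z. pmw_succ mech D S Q e0 E k (mw_update S A q (clip01 (qdata q D + z))) (hist @ [A])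
        \<partial>gauss (1 / (real (length D) * e0))) \<partial>measure_pmf (select mech (e0 * real (length D) / 2) Q s))"
  proof (rule select_gauss_one_minus_ge[OF Q _ \<eta> _ b(1) _ W round])
    show "b \<le> 1 / (4 * (1 / (real (length D) * e0))\<^sup>2)" using b(2) by (simp add: power_divide)
  qed (use D e0 in auto)
  also have "\<dots> = pmw_succ mech D S Q e0 E (Suc k) A hist" by (simp add: s_def)
  finally show ?thesis .
qed

lemma pmw_succ_ge_potential:
  fixes D :: "'a list" and Q :: "('a \<Rightarrow> real) set" and \<rho> f :: real
  defines "K \<equiv> sqrt 2 * card Q" and "a \<equiv> 1 / (4 * \<rho>) + 6 * \<rho> * f\<^sup>2"
  assumes S: "finite S" "S \<noteq> {}" and Q: "finite Q" "Q \<noteq> {}"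
    and q01: "\<forall>q\<in>Q. \<forall>x\<in>S. 0 \<le> q x \<and> q x \<le> 1" and qD: "\<forall>q\<in>Q. 0 \<le> qdata q D \<and> qdata q D \<le> 1"
    and D: "D \<noteq> []" and e0: "0 < e0"
    and \<eta>: "0 \<le> \<eta>" "\<eta> \<le> e0 * real (length D) / 2"
    and \<rho>: "0 < \<rho>" "4 * \<eta> * \<rho> \<le> (real (length D) * e0)\<^sup>2 / 4"
    and \<mu>: "\<forall>x\<in>S. 0 \<le> \<mu> x" "(\<Sum>x\<in>S. \<mu> x) = 1" "\<forall>q\<in>Q. \<bar>qdist q S \<mu> - qdata q D\<bar> \<le> f"
    and success: "\<And>hs. length hs = T \<Longrightarrow> \<forall>B\<in>set hs. positive_dist S B \<Longrightarrow>
      sum_list (map (max_err D S Q) hs) \<le> \<tau> \<Longrightarrow> E hs"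
  shows "length hist + k = T \<Longrightarrow> positive_dist S A \<Longrightarrow> \<forall>B\<in>set hist. positive_dist S B \<Longrightarrow>
    ennreal (1 - K ^ k * exp (\<eta> * (sum_list (map (max_err D S Q) hist) + 8 * \<rho> * cross_entropy S \<mu> A
      + k * a - \<tau>)))
    \<le> pmw_succ mech D S Q e0 E k A hist"
proof (induction k arbitrary: A hist)
  case 0
  show ?case
  proof (cases "E hist")
    case False
    then have "\<tau> < sum_list (map (max_err D S Q) hist)" using success 0 by force
    moreover have "0 \<le> 8 * \<rho> * cross_entropy S \<mu> A"
      using cross_entropy_nonneg[OF "0.prems"(2) S(1) \<mu>(1)] \<rho> by simp
    ultimately have "0 \<le> \<eta> * (sum_list (map (max_err D S Q) hist) + 8 * \<rho> * cross_entropy S \<mu> A - \<tau>)"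
      using \<eta> by (intro mult_nonneg_nonneg) auto
    then show ?thesis using False by (simp add: ennreal_neg)
  qed simp
next
  case (Suc k)
  define W where "W = K ^ k * exp (\<eta> * (sum_list (map (max_err D S Q) hist)
    + 8 * \<rho> * cross_entropy S \<mu> A + Suc k * a - \<tau>))"
  define s where "s = (\<lambda>q. \<bar>qdist q S A - qdata q D\<bar>)"
  define A' where "A' = (\<lambda>q z. mw_update S A q (clip01 (qdata q D + z)))"
  have step: "ennreal (1 - W * exp (\<eta> * (Max (s ` Q) - s q)) * exp (4 * \<eta> * \<rho> * z\<^sup>2))
      \<le> pmw_succ mech D S Q e0 E k (A' q z) (hist @ [A])" if q: "q \<in> Q" for q z
  proof -
    have "s q - a - 8 * \<rho> * (cross_entropy S \<mu> A - cross_entropy S \<mu> (A' q z)) \<le> 4 * \<rho> * z\<^sup>2"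
      unfolding s_def A'_def a_def using q q01 qD \<mu> \<rho>
      by (intro abs_err_le_cross_entropy_drop[OF S Suc.prems(2)]) auto
    then have "\<eta> * (sum_list (map (max_err D S Q) (hist @ [A])) + 8 * \<rho> * cross_entropy S \<mu> (A' q z) + k * a - \<tau>)
        \<le> \<eta> * (sum_list (map (max_err D S Q) hist) + 8 * \<rho> * cross_entropy S \<mu> A + Suc k * a - \<tau>)
          + \<eta> * (Max (s ` Q) - s q) + 4 * \<eta> * \<rho> * z\<^sup>2"
      using mult_left_mono[OF _ \<eta>(1)] unfolding max_err_def s_def by (fastforce simp: algebra_simps)
    then have "K ^ k * exp (\<eta> * (sum_list (map (max_err D S Q) (hist @ [A]))
        + 8 * \<rho> * cross_entropy S \<mu> (A' q z) + k * a - \<tau>))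
        \<le> K ^ k * exp (\<eta> * (sum_list (map (max_err D S Q) hist) + 8 * \<rho> * cross_entropy S \<mu> A
          + Suc k * a - \<tau>) + \<eta> * (Max (s ` Q) - s q) + 4 * \<eta> * \<rho> * z\<^sup>2)"
      unfolding K_def by (intro mult_left_mono) auto
    also have "\<dots> = W * exp (\<eta> * (Max (s ` Q) - s q)) * exp (4 * \<eta> * \<rho> * z\<^sup>2)"
      unfolding W_def by (simp add: exp_add mult.assoc)
    moreover have "positive_dist S (A' q z)"
      unfolding A'_def using positive_dist_mw_update[OF S Suc.prems(2)] .
    ultimately show ?thesis
      using Suc.prems by (intro order_trans[OF _ Suc.IH] ennreal_leI) auto
  qed
  have "ennreal (1 - W * sqrt 2 * card Q) \<le> pmw_succ mech D S Q e0 E (Suc k) A hist"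
    using step \<eta> \<rho> unfolding A'_def s_def
    by (intro pmw_succ_Suc_ge[OF Q D e0, where b = "4 * \<eta> * \<rho>"]) (auto simp: W_def K_def)
  moreover have "K ^ Suc k * exp (\<eta> * (sum_list (map (max_err D S Q) hist)
      + 8 * \<rho> * cross_entropy S \<mu> A + Suc k * a - \<tau>)) = W * sqrt 2 * card Q"
    unfolding W_def K_def by (simp add: algebra_simps)
  ultimately show ?case by simp
qed

definition avg_dist :: "('a \<Rightarrow> real) list \<Rightarrow> 'a \<Rightarrow> real" where
  "avg_dist hs x = (\<Sum>B\<leftarrow>hs. B x) / real (length hs)"

lemma sum_sum_list_swap: "(\<Sum>x\<in>S. \<Sum>B\<leftarrow>hs. g B x) = (\<Sum>B\<leftarrow>hs. \<Sum>x\<in>S. g B x)"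
  by (induction hs) (simp_all add: sum.distrib)

lemma sum_list_pos:
  fixes f :: "'b \<Rightarrow> 'a::ordered_comm_monoid_add"
  shows "xs \<noteq> [] \<Longrightarrow> (\<And>x. x \<in> set xs \<Longrightarrow> 0 < f x) \<Longrightarrow> 0 < (\<Sum>x\<leftarrow>xs. f x)"
proof (induction xs)
  case (Cons x xs)
  then show ?case by (cases "xs = []") (auto intro: add_pos_pos)
qed simp

lemma positive_dist_avg_dist:
  assumes "finite S" "hs \<noteq> []" "\<forall>B\<in>set hs. positive_dist S B"
  shows "positive_dist S (avg_dist hs)"
proof -
  have "(\<Sum>x\<in>S. \<Sum>B\<leftarrow>hs. B x) = (\<Sum>B\<leftarrow>hs. 1)"
    unfolding sum_sum_list_swap using assms(3)
    by (intro arg_cong[where f = sum_list] map_cong) (auto simp: positive_dist_def)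
  moreover have "(\<Sum>B\<leftarrow>hs. B x) = (\<Sum>B\<leftarrow>hs. 0)" if "x \<notin> S" for x
    using assms(3) that by (intro arg_cong[where f = sum_list] map_cong) (auto simp: positive_dist_def)
  ultimately show ?thesis
    using assms unfolding positive_dist_def avg_dist_def
    by (auto simp: sum_divide_distrib[symmetric] sum_list_triv intro!: divide_pos_pos sum_list_pos)
qed

lemma qdist_avg_dist: "qdist q S (avg_dist hs) = (\<Sum>B\<leftarrow>hs. qdist q S B) / real (length hs)"
proof -
  have "(\<Sum>x\<in>S. avg_dist hs x * q x) = (\<Sum>x\<in>S. \<Sum>B\<leftarrow>hs. B x * q x) / real (length hs)"
    unfolding avg_dist_def by (simp add: sum_divide_distrib sum_list_mult_const)
  then show ?thesis unfolding qdist_def sum_sum_list_swap .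
qed

lemma abs_err_le_max_err: "finite Q \<Longrightarrow> q \<in> Q \<Longrightarrow> \<bar>qdist q S A - qdata q D\<bar> \<le> max_err D S Q A"
  unfolding max_err_def by (rule Max_ge) auto

lemma max_err_avg_dist_le:
  assumes "finite Q" "Q \<noteq> {}" "hs \<noteq> []"
  shows "max_err D S Q (avg_dist hs) \<le> (\<Sum>B\<leftarrow>hs. max_err D S Q B) / real (length hs)"
  unfolding max_err_def[of D S Q "avg_dist hs"]
proof (rule Max.boundedI)
  fix e assume "e \<in> (\<lambda>q. \<bar>qdist q S (avg_dist hs) - qdata q D\<bar>) ` Q"
  then obtain q where q: "q \<in> Q" and e: "e = \<bar>qdist q S (avg_dist hs) - qdata q D\<bar>" by auto
  have "e = \<bar>\<Sum>B\<leftarrow>hs. qdist q S B - qdata q D\<bar> / real (length hs)"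
    unfolding e qdist_avg_dist using assms(3)
    by (simp add: sum_list_subtractf sum_list_triv field_simps abs_divide)
  also have "\<dots> \<le> (\<Sum>B\<leftarrow>hs. max_err D S Q B) / real (length hs)"
    using sum_list_abs[of "map (\<lambda>B. qdist q S B - qdata q D) hs"]
      sum_list_mono[of hs "\<lambda>B. \<bar>qdist q S B - qdata q D\<bar>" "max_err D S Q"]
      abs_err_le_max_err[OF assms(1) q]
    by (intro divide_right_mono) (simp_all add: o_def)
  finally show "e \<le> (\<Sum>B\<leftarrow>hs. max_err D S Q B) / real (length hs)" .
qed (use assms in auto)

lemma max_err_le_one:
  assumes "finite Q" "Q \<noteq> {}" "positive_dist S A"
    and "\<forall>q\<in>Q. \<forall>x\<in>S. 0 \<le> q x \<and> q x \<le> 1" "\<forall>q\<in>Q. 0 \<le> qdata q D \<and> qdata q D \<le> 1"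
  shows "max_err D S Q A \<le> 1"
  unfolding max_err_def
proof (rule Max.boundedI)
  fix e assume "e \<in> (\<lambda>q. \<bar>qdist q S A - qdata q D\<bar>) ` Q"
  then obtain q where "q \<in> Q" "e = \<bar>qdist q S A - qdata q D\<bar>" by auto
  then show "e \<le> 1"
    using assms qdist_nonneg[OF assms(3), of q] qdist_le_one[OF assms(3), of q] by auto
qed (use assms in auto)

lemma qdata_nonneg: "D \<noteq> [] \<Longrightarrow> \<forall>x\<in>set D. 0 \<le> q x \<Longrightarrow> 0 \<le> qdata q D"
  unfolding qdata_def by (intro divide_nonneg_nonneg sum_list_nonneg) auto

lemma qdata_le_one:
  assumes "\<forall>x\<in>set D. q x \<le> 1"
  shows "qdata q D \<le> 1"
proof (cases "D = []")
  case False
  have "(\<Sum>x\<leftarrow>D. q x) \<le> (\<Sum>x\<leftarrow>D. 1)" using assms by (intro sum_list_mono) auto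
  then show ?thesis using False unfolding qdata_def by (simp add: sum_list_triv)
qed (simp add: qdata_def)

lemma positive_dist_empirical:
  assumes "D \<noteq> []"
  shows "positive_dist (set D) (empirical D)"
proof -
  have "0 < count_list D x" if "x \<in> set D" for x using that by (metis count_list_0_iff gr0I)
  moreover have "(\<Sum>x\<in>set D. count_list D x) = length D" by (rule sum_count_set) auto
  ultimately show ?thesis
    using assms unfolding positive_dist_def empirical_def
    by (auto simp: sum_divide_distrib[symmetric] simp flip: of_nat_sum intro!: divide_pos_pos)
qed

lemma cross_entropy_empirical_le:
  assumes "D \<noteq> []" "\<forall>x\<in>set D. 0 \<le> \<mu> x" "(\<Sum>x\<in>set D. \<mu> x) = 1"
  shows "cross_entropy (set D) \<mu> (empirical D) \<le> ln (real (length D))"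
proof -
  have "- (\<mu> x * ln (empirical D x)) \<le> \<mu> x * ln (real (length D))" if x: "x \<in> set D" for x
  proof -
    have "1 / real (length D) \<le> empirical D x"
      using x unfolding empirical_def
      by (intro divide_right_mono) (auto simp: Suc_le_eq intro: gr0I dest: count_list_0_iff[THEN iffD1])
    then have "- ln (empirical D x) \<le> ln (real (length D))"
      using ln_mono[of "1 / real (length D)" "empirical D x"] assms(1) by (simp add: ln_div)
    then show ?thesis using assms(2) x mult_left_mono by fastforce
  qed
  then have "cross_entropy (set D) \<mu> (empirical D) \<le> (\<Sum>x\<in>set D. \<mu> x * ln (real (length D)))"
    unfolding cross_entropy_def by (simp add: sum_negf[symmetric] sum_mono)
  also have "\<dots> = ln (real (length D))" using assms(3) by (simp add: sum_distrib_right[symmetric])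
  finally show ?thesis .
qed

lemma Max_abs_nonneg:
  fixes g :: "'b \<Rightarrow> real"
  assumes "finite Q" "Q \<noteq> {}"
  shows "0 \<le> Max ((\<lambda>q. \<bar>g q\<bar>) ` Q)"
proof -
  obtain q where "q \<in> Q" using assms(2) by blast
  then show ?thesis using assms by (meson Max_ge abs_ge_zero finite_imageI image_eqI order_trans)
qed

lemma best_mixture_error_nonneg:
  assumes "finite Q" "Q \<noteq> {}" "prob_simplex S \<noteq> {}"
  shows "0 \<le> best_mixture_error D Q S"
  unfolding best_mixture_error_def using assms by (intro cINF_greatest Max_abs_nonneg)

lemma best_mixture_error_approx:
  assumes "finite Q" "Q \<noteq> {}" "prob_simplex S \<noteq> {}" "best_mixture_error D Q S < t"
  obtains \<mu> where "\<mu> \<in> prob_simplex S" "\<forall>q\<in>Q. \<bar>qdist q S \<mu> - qdata q D\<bar> \<le> t"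
proof -
  have "bdd_below ((\<lambda>\<mu>. Max ((\<lambda>q. \<bar>qdata q D - (\<Sum>x\<in>S. \<mu> x * q x)\<bar>) ` Q)) ` prob_simplex S)"
    using assms(1,2) by (intro bdd_belowI[of _ 0]) (auto intro: Max_abs_nonneg)
  then obtain \<mu> where \<mu>: "\<mu> \<in> prob_simplex S"
    and "Max ((\<lambda>q. \<bar>qdata q D - (\<Sum>x\<in>S. \<mu> x * q x)\<bar>) ` Q) < t"
    using assms(4) cINF_less_iff[OF assms(3)] unfolding best_mixture_error_def by blast
  moreover have "\<bar>qdata q D - (\<Sum>x\<in>S. \<mu> x * q x)\<bar> \<le> Max ((\<lambda>q. \<bar>qdata q D - (\<Sum>x\<in>S. \<mu> x * q x)\<bar>) ` Q)"
    if "q \<in> Q" for q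
    using assms(1) that by (intro Max_ge) auto
  ultimately have "\<bar>qdist q S \<mu> - qdata q D\<bar> \<le> t" if "q \<in> Q" for q
    using that unfolding qdist_def by (fastforce simp: abs_minus_commute)
  then show ?thesis using that \<mu> by blast
qed

lemma max_err_singleton:
  assumes "positive_dist {x0} A"
  shows "max_err D {x0} Q A = best_mixture_error D Q {x0}"
proof -
  have "Max ((\<lambda>q. \<bar>qdata q D - (\<Sum>x\<in>{x0}. \<mu> x * q x)\<bar>) ` Q) = max_err D {x0} Q A"
    if "\<mu> \<in> prob_simplex {x0}" for \<mu>
    using that assms by (simp add: prob_simplex_def positive_dist_def max_err_def qdist_def abs_minus_commute)
  then have "best_mixture_error D Q {x0} = (INF \<mu> \<in> prob_simplex {x0}. max_err D {x0} Q A)"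
    unfolding best_mixture_error_def by (rule INF_cong[OF refl])
  moreover have "(\<lambda>_. 1) \<in> prob_simplex {x0}" by (simp add: prob_simplex_def)
  then have "prob_simplex {x0} \<noteq> {}" by blast
  ultimately show ?thesis by (simp add: cINF_const)
qed

lemma pmw_pub_prob_ge_potential:
  fixes Dpriv Dpub :: "'a list" and Q :: "('a \<Rightarrow> real) set" and eps \<rho> f :: real and T :: nat
  defines "S \<equiv> set Dpub" and "L \<equiv> real (length Dpriv) * eps / sqrt (2 * real T)"
  assumes D: "Dpriv \<noteq> []" "Dpub \<noteq> []" and Q: "finite Q" "Q \<noteq> {}"
    and q01: "\<forall>q\<in>Q. \<forall>x\<in>set Dpriv \<union> set Dpub. 0 \<le> q x \<and> q x \<le> 1"
    and eps: "0 < eps" and T: "0 < T"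
    and \<mu>: "\<mu> \<in> prob_simplex S" "\<forall>q\<in>Q. \<bar>qdist q S \<mu> - qdata q Dpriv\<bar> \<le> f"
    and \<rho>: "0 < \<rho>" "\<rho> \<le> L / 4"
    and P: "\<And>A. positive_dist S A \<Longrightarrow> max_err Dpriv S Q A \<le> \<tau> / real T \<Longrightarrow> P A"
  shows "ennreal (1 - (sqrt 2 * card Q) ^ T * exp (L / 4 * (8 * \<rho> * ln (real (length Dpub))
      + T * (1 / (4 * \<rho>) + 6 * \<rho> * f\<^sup>2) - \<tau>)))
    \<le> pmw_pub_prob mech Dpriv Dpub Q eps T P"
proof -
  define e0 where "e0 = eps / sqrt (2 * real T)"
  define a where "a = 1 / (4 * \<rho>) + 6 * \<rho> * f\<^sup>2"
  define E where "E = (\<lambda>hs. P (\<lambda>x. (\<Sum>B\<leftarrow>hs. B x) / real T))"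
  have L: "L = real (length Dpriv) * e0" "0 < L"
    unfolding L_def e0_def using D eps T by auto
  have S: "finite S" "S \<noteq> {}" unfolding S_def using D by auto
  have success: "E hs" if hs: "length hs = T" "\<forall>B\<in>set hs. positive_dist S B"
    "sum_list (map (max_err Dpriv S Q) hs) \<le> \<tau>" for hs
  proof -
    have "max_err Dpriv S Q (avg_dist hs) \<le> \<tau> / T"
      using max_err_avg_dist_le[OF Q, of hs Dpriv S] hs T divide_right_mono[OF hs(3), of T] by auto
    then have "P (avg_dist hs)" using T hs by (intro P positive_dist_avg_dist S) auto
    then show ?thesis unfolding E_def avg_dist_def hs(1) .
  qed
  have "cross_entropy S \<mu> (empirical Dpub) \<le> ln (real (length Dpub))"
    using cross_entropy_empirical_le[OF D(2)] \<mu>(1) unfolding S_def prob_simplex_def by blast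
  then have "ennreal (1 - (sqrt 2 * card Q) ^ T * exp (L / 4 * (8 * \<rho> * ln (real (length Dpub)) + T * a - \<tau>)))
    \<le> ennreal (1 - (sqrt 2 * card Q) ^ T * exp (L / 4 * (sum_list (map (max_err Dpriv S Q) [])
      + 8 * \<rho> * cross_entropy S \<mu> (empirical Dpub) + T * a - \<tau>)))"
    using L(2) \<rho>(1) by (intro ennreal_leI diff_left_mono mult_left_mono) auto
  also have "\<dots> \<le> pmw_succ mech Dpriv S Q e0 E T (empirical Dpub) []"
    unfolding a_def
  proof (rule pmw_succ_ge_potential[OF S Q _ _ D(1) _ _ _ \<rho>(1) _ _ _ \<mu>(2) success])
    show "\<forall>q\<in>Q. \<forall>x\<in>S. 0 \<le> q x \<and> q x \<le> 1" using q01 unfolding S_def by blast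
    show "\<forall>q\<in>Q. 0 \<le> qdata q Dpriv \<and> qdata q Dpriv \<le> 1"
      using q01 D(1) by (auto intro: qdata_nonneg qdata_le_one)
    show "0 < e0" "0 \<le> L / 4" "L / 4 \<le> e0 * real (length Dpriv) / 2"
      using L eps T unfolding e0_def by (auto simp: mult.commute)
    show "4 * (L / 4) * \<rho> \<le> (real (length Dpriv) * e0)\<^sup>2 / 4"
      using L mult_left_mono[OF \<rho>(2), of L] by (simp add: power2_eq_square)
    show "\<forall>x\<in>S. 0 \<le> \<mu> x" "(\<Sum>x\<in>S. \<mu> x) = 1" using \<mu>(1) by (auto simp: prob_simplex_def)
    show "positive_dist S (empirical Dpub)" unfolding S_def using D(2) by (rule positive_dist_empirical)
  qed simp_all
  also have "\<dots> = pmw_pub_prob mech Dpriv Dpub Q eps T P"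
    unfolding pmw_pub_prob_def S_def e0_def E_def ..
  finally show ?thesis unfolding a_def .
qed

lemma pmw_pub_prob_ge:
  fixes Dpriv Dpub :: "'a list" and Q :: "('a \<Rightarrow> real) set" and eps :: real and T :: nat
  defines "S \<equiv> set Dpub" and "L \<equiv> real (length Dpriv) * eps / sqrt (2 * real T)"
  assumes D: "Dpriv \<noteq> []" "Dpub \<noteq> []" and Q: "finite Q" "Q \<noteq> {}"
    and q01: "\<forall>q\<in>Q. \<forall>x\<in>set Dpriv \<union> set Dpub. 0 \<le> q x \<and> q x \<le> 1"
    and eps: "0 < eps" and T: "0 < T" and \<beta>: "0 < \<beta>"
    and \<mu>: "\<mu> \<in> prob_simplex S" "\<forall>q\<in>Q. \<bar>qdist q S \<mu> - qdata q Dpriv\<bar> \<le> f"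
    and \<rho>: "0 < \<rho>" "\<rho> \<le> L / 4"
    and P: "\<And>A. positive_dist S A \<Longrightarrow>
      max_err Dpriv S Q A \<le> 1 / (4 * \<rho>) + 6 * \<rho> * f\<^sup>2 + (8 * \<rho> * ln (real (length Dpub))
        + 4 * (real T * ln (sqrt 2 * card Q) + ln (1 / \<beta>)) / L) / real T \<Longrightarrow> P A"
  shows "ennreal (1 - \<beta>) \<le> pmw_pub_prob mech Dpriv Dpub Q eps T P"
proof -
  define a where "a = 1 / (4 * \<rho>) + 6 * \<rho> * f\<^sup>2"
  define K where "K = sqrt 2 * card Q"
  \<comment> \<open>the threshold for which the failure bound of the potential argument is exactly \<beta>\<close>
  define \<tau> where "\<tau> = 8 * \<rho> * ln (real (length Dpub)) + T * a + 4 * (T * ln K + ln (1 / \<beta>)) / L"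
  have L: "0 < L" unfolding L_def using D eps T by simp
  have K: "0 < K" unfolding K_def using Q by (simp add: card_gt_0_iff)
  have exponent: "L / 4 * (8 * \<rho> * ln (real (length Dpub)) + T * a - \<tau>) = - (T * ln K + ln (1 / \<beta>))"
    unfolding \<tau>_def using L by (simp add: field_simps)
  have "K ^ T * exp (- (T * ln K + ln (1 / \<beta>))) = \<beta>"
    using K \<beta> by (simp add: exp_diff exp_of_nat_mult ln_div)
  then have "K ^ T * exp (L / 4 * (8 * \<rho> * ln (real (length Dpub)) + T * a - \<tau>)) = \<beta>"
    unfolding exponent .
  moreover have "ennreal (1 - K ^ T * exp (L / 4 * (8 * \<rho> * ln (real (length Dpub)) + T * a - \<tau>)))
      \<le> pmw_pub_prob mech Dpriv Dpub Q eps T P"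
    unfolding K_def a_def L_def
  proof (rule pmw_pub_prob_ge_potential[OF D Q q01 eps T \<mu>[unfolded S_def] \<rho>[unfolded L_def]])
    fix A assume "positive_dist (set Dpub) A" "max_err Dpriv (set Dpub) Q A \<le> \<tau> / real T"
    then show "P A"
      using T unfolding S_def[symmetric] L_def[symmetric]
      by (intro P) (auto simp: \<tau>_def a_def K_def add_divide_distrib)
  qed
  ultimately show ?thesis by simp
qed

lemma ln_ge_two_thirds:
  fixes x :: real
  assumes "2 \<le> x"
  shows "2/3 \<le> ln x"
proof -
  have "ln 2 \<le> ln x" using assms by simp
  then show ?thesis using ln2_ge_two_thirds by linarith
qed

lemma ln_sqrt2_mult_bounds:
  fixes c :: real
  assumes "2 \<le> c"
  shows "0 \<le> ln (sqrt 2 * c)" "ln (sqrt 2 * c) \<le> 3/2 * ln c"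
proof -
  have "ln (sqrt 2 * c) = ln 2 / 2 + ln c" using assms by (subst ln_mult) (auto simp: ln_sqrt)
  moreover have "0 \<le> ln (2::real)" "ln 2 \<le> ln c" using assms by simp_all
  ultimately show "0 \<le> ln (sqrt 2 * c)" "ln (sqrt 2 * c) \<le> 3/2 * ln c" by linarith+
qed

lemma pmw_noise_scale_le:
  fixes lq lm lb \<Lambda> T :: real
  assumes lq: "2/3 \<le> lq" and lm: "2/3 \<le> lm" and lb: "0 < lb" and \<Lambda>: "5 * lq \<le> \<Lambda>"
    and T: "0 \<le> T" "4 * T \<le> \<Lambda> * sqrt lm / lq + lb + 4"
  shows "lq * sqrt (2 * T) / \<Lambda> \<le> sqrt (lq * (sqrt lm + lb) / \<Lambda>)"
proof -
  have lq0: "0 < lq" and \<Lambda>0: "0 < \<Lambda>" using lq \<Lambda> by auto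
  have "lq * (4 * T) \<le> lq * (\<Lambda> * sqrt lm / lq + lb + 4)"
    using T(2) lq0 by (intro mult_left_mono) auto
  also have "\<dots> = \<Lambda> * sqrt lm + lq * lb + 4 * lq" using lq0 by (simp add: distrib_left)
  finally have "lq * (4 * T) \<le> \<Lambda> * sqrt lm + lq * lb + 4 * lq" .
  moreover have "4/5 \<le> sqrt lm" using lm by (intro real_le_rsqrt) (simp add: power2_eq_square)
  then have "\<Lambda> * (4/5) \<le> \<Lambda> * sqrt lm" using \<Lambda>0 by (intro mult_left_mono) auto
  then have "4 * lq \<le> \<Lambda> * sqrt lm" using \<Lambda> by linarith
  moreover have "lq * lb \<le> \<Lambda> * lb / 5" using \<Lambda> lb by simp
  moreover have "0 < \<Lambda> * lb" using \<Lambda>0 lb by simp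
  ultimately have "lq * (2 * T) \<le> (sqrt lm + lb) * \<Lambda>" by (simp add: algebra_simps)
  then have "lq * (lq * (2 * T)) / \<Lambda>\<^sup>2 \<le> lq * ((sqrt lm + lb) * \<Lambda>) / \<Lambda>\<^sup>2"
    using lq0 by (intro divide_right_mono mult_left_mono) auto
  then have "(lq * sqrt (2 * T) / \<Lambda>)\<^sup>2 \<le> lq * ((sqrt lm + lb) * \<Lambda>) / \<Lambda>\<^sup>2"
    using T(1) by (simp add: power_divide power_mult_distrib power2_eq_square[of lq])
  also have "\<dots> = lq * (sqrt lm + lb) / \<Lambda>" using \<Lambda>0 by (simp add: power2_eq_square)
  finally show ?thesis by (rule real_le_rsqrt)
qed

lemma pmw_entropy_rate_le:
  fixes lq lm lb \<Lambda> T :: real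
  assumes "0 < lq" "0 < lm" "0 \<le> lb" "0 < \<Lambda>" "\<Lambda> * sqrt lm / lq + lb \<le> 4 * T"
  shows "lm / T \<le> 4 * (lq * (sqrt lm + lb) / \<Lambda>)"
proof -
  have pos: "0 < \<Lambda> * sqrt lm / (4 * lq)" using assms by simp
  moreover have "\<Lambda> * sqrt lm / (4 * lq) = (\<Lambda> * sqrt lm / lq) / 4" by simp
  then have "\<Lambda> * sqrt lm / (4 * lq) \<le> T" using assms(3,5) by linarith
  ultimately have "lm / T \<le> lm / (\<Lambda> * sqrt lm / (4 * lq))"
    using assms(2) by (intro divide_left_mono mult_pos_pos) auto
  also have "\<dots> = 4 * lq * sqrt lm / \<Lambda>"
  proof -
    have "r * r / (\<Lambda> * r / (4 * lq)) = 4 * lq * r / \<Lambda>" if "0 < r" for r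
      using that assms(1,4) by (simp add: field_simps)
    from this[of "sqrt lm"] show ?thesis using assms(2) by simp
  qed
  also have "\<dots> \<le> 4 * (lq * (sqrt lm + lb) / \<Lambda>)" using assms by (simp add: field_simps)
  finally show ?thesis .
qed

lemma pmw_rate_ge_two_fifths:
  fixes lq lm lb \<Lambda> :: real
  assumes "0 < lq" "2/3 \<le> lm" "0 \<le> lb" "0 < \<Lambda>" "\<Lambda> < 5 * lq"
  shows "2/5 \<le> sqrt (lq * (sqrt lm + lb) / \<Lambda>)"
proof (rule real_le_rsqrt)
  have "4/5 \<le> sqrt lm" using assms(2) by (intro real_le_rsqrt) (simp add: power2_eq_square)
  then have "lq * (4/5) \<le> lq * (sqrt lm + lb)" using assms by (intro mult_left_mono) auto
  then have "4/25 * \<Lambda> \<le> lq * (sqrt lm + lb)" using assms(5) by linarith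
  then show "(2/5)\<^sup>2 \<le> lq * (sqrt lm + lb) / \<Lambda>"
    using assms(4) by (simp add: power2_eq_square pos_le_divide_eq)
qed

lemma pmw_error_rate_le:
  fixes lq lm lb lK T L R f :: real
  defines "\<rho> \<equiv> min (L / 4) (1 / (4 * (f + 2 * R)))"
  assumes lq: "2/3 \<le> lq" and lK: "0 \<le> lK" "lK \<le> 3/2 * lq" and f: "0 \<le> f"
    and pos: "0 < R" "0 < L" "0 < T" "0 \<le> lm" "0 \<le> lb"
    and rates: "lq / L \<le> R" "lm / T \<le> 4 * R\<^sup>2" "lb / T \<le> 4"
  shows "1 / (4 * \<rho>) + 6 * \<rho> * (f + R)\<^sup>2 + (8 * \<rho> * lm + 4 * (T * lK + lb) / L) / T \<le> 50 * (R + f)"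
proof -
  have "1 / L = (lq / L) / lq" using lq by simp
  also have "\<dots> \<le> R / (2/3)" using lq rates(1) pos by (intro frac_le) auto
  finally have inv_L: "1 / L \<le> 3/2 * R" by simp
  then have "1 / (2 * R) \<le> L" using pos by (simp add: field_simps)
  moreover have "1 / (f + 2 * R) \<le> 1 / (2 * R)" using f pos by (intro divide_left_mono) auto
  ultimately have "1 / (f + 2 * R) / 4 \<le> L / 4" by (intro divide_right_mono) auto
  then have "1 / (4 * (f + 2 * R)) \<le> L / 4" by (simp add: mult.commute)
  then have \<rho>: "\<rho> = 1 / (4 * (f + 2 * R))" unfolding \<rho>_def by simp
  have "1 / (4 * \<rho>) + 6 * \<rho> * (f + R)\<^sup>2 = (f + 2 * R) + 3/2 * ((f + R) * ((f + R) / (f + 2 * R)))"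
    unfolding \<rho> using f pos by (simp add: field_simps power2_eq_square)
  also have "\<dots> \<le> (f + 2 * R) + 3/2 * ((f + R) * 1)"
    using f pos by (intro add_left_mono mult_left_mono) auto
  also have "\<dots> = 5/2 * f + 7/2 * R" by (simp add: field_simps)
  finally have t0: "1 / (4 * \<rho>) + 6 * \<rho> * (f + R)\<^sup>2 \<le> 5/2 * f + 7/2 * R" .
  have "8 * (1 / (4 * x)) = 2 / x" for x :: real by simp
  then have "8 * \<rho> = 2 / (f + 2 * R)" unfolding \<rho> .
  then have "8 * \<rho> * lm / T = 2 / (f + 2 * R) * (lm / T)" by simp
  also have "\<dots> \<le> 2 / (2 * R) * (4 * R\<^sup>2)"
    using f pos rates by (intro mult_mono divide_left_mono) auto
  finally have t1: "8 * \<rho> * lm / T \<le> 4 * R" using pos by (simp add: power2_eq_square)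
  have t2: "4 * lK / L \<le> 6 * R"
    using mult_left_mono[OF lK(2), of "4 / L"] mult_left_mono[OF rates(1), of 6] pos by simp
  have t3: "4 * (lb / T) / L \<le> 24 * R"
    using mult_mono[OF rates(3) inv_L] pos by (simp add: field_simps)
  have split: "(8 * \<rho> * lm + 4 * (T * lK + lb) / L) / T = 8 * \<rho> * lm / T + 4 * lK / L + 4 * (lb / T) / L"
    using pos by (simp add: field_simps)
  have "1 / (4 * \<rho>) + 6 * \<rho> * (f + R)\<^sup>2 + (8 * \<rho> * lm + 4 * (T * lK + lb) / L) / T
      \<le> (5/2 * f + 7/2 * R) + (4 * R + 6 * R + 24 * R)"
    unfolding split by (intro add_mono t0 t1 t2 t3)
  also have "\<dots> \<le> 50 * (R + f)" using f pos by simp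
  finally show ?thesis .
qed

lemma pmw_error_le:
  fixes lq lm lb lK \<Lambda> T f e :: real
  assumes R_def: "R = sqrt (lq * (sqrt lm + lb) / \<Lambda>)" and L_def: "L = \<Lambda> / sqrt (2 * T)"
    and \<rho>_def: "\<rho> = min (L / 4) (1 / (4 * (f + 2 * R)))"
    and lq: "2/3 \<le> lq" and lm: "2/3 \<le> lm" and lb: "0 < lb" and \<Lambda>: "0 < \<Lambda>" and f: "0 \<le> f"
    and lK: "0 \<le> lK" "lK \<le> 3/2 * lq"
    and T: "\<Lambda> * sqrt lm / lq + lb \<le> 4 * T" "4 * T \<le> \<Lambda> * sqrt lm / lq + lb + 4"
    and e: "e \<le> 1" "e \<le> 1 / (4 * \<rho>) + 6 * \<rho> * (f + R)\<^sup>2 + (8 * \<rho> * lm + 4 * (T * lK + lb) / L) / T"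
  shows "e \<le> 50 * (R + f)"
proof (cases "\<Lambda> < 5 * lq")
  case True
  then have "2/5 \<le> R" unfolding R_def using lq lm lb \<Lambda> by (intro pmw_rate_ge_two_fifths) auto
  then show ?thesis using e(1) f by simp
next
  case False
  have "0 \<le> \<Lambda> * sqrt lm / lq" using lq lm \<Lambda> by simp
  then have lb_T: "lb \<le> 4 * T" and T_pos: "0 < T" using T(1) lb by linarith+
  have "0 < lq * (sqrt lm + lb) / \<Lambda>" using lq lm lb \<Lambda> by (simp add: add_nonneg_pos)
  then have R_pos: "0 < R" and R_sq: "R\<^sup>2 = lq * (sqrt lm + lb) / \<Lambda>" unfolding R_def by simp_all
  have "lq / L = lq * sqrt (2 * T) / \<Lambda>" unfolding L_def by simp
  also have "\<dots> \<le> R"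
    unfolding R_def using False T_pos by (intro pmw_noise_scale_le[OF lq lm lb _ _ T(2)]) auto
  finally have "lq / L \<le> R" .
  moreover have "lm / T \<le> 4 * R\<^sup>2"
    unfolding R_sq using lq lm lb \<Lambda> T(1) by (intro pmw_entropy_rate_le) auto
  moreover have "lb / T \<le> 4" using lb_T T_pos by (simp add: divide_le_eq)
  moreover have "0 < L" unfolding L_def using \<Lambda> T_pos by simp
  ultimately have "1 / (4 * \<rho>) + 6 * \<rho> * (f + R)\<^sup>2 + (8 * \<rho> * lm + 4 * (T * lK + lb) / L) / T
      \<le> 50 * (R + f)"
    unfolding \<rho>_def using lq lK f R_pos T_pos lm lb by (intro pmw_error_rate_le) auto
  then show ?thesis using e(2) by linarith
qed

lemma pmw_pub_accuracy:
  fixes Dpriv Dpub :: "'a list" and Q :: "('a \<Rightarrow> real) set" and eps \<beta> :: real and T :: nat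
  defines "\<Lambda> \<equiv> real (length Dpriv) * eps" and "lm \<equiv> ln (real (length Dpub))"
    and "lq \<equiv> ln (real (card Q))" and "lb \<equiv> ln (1 / \<beta>)"
  assumes D: "Dpriv \<noteq> []" "Dpub \<noteq> []" and Q: "finite Q" "2 \<le> card Q"
    and q01: "\<forall>q\<in>Q. \<forall>x\<in>set Dpriv \<union> set Dpub. 0 \<le> q x \<and> q x \<le> 1"
    and eps: "0 < eps" and \<beta>: "0 < \<beta>" "\<beta> < 1"
    and T: "\<Lambda> * sqrt lm / lq + lb \<le> 4 * real T" "4 * real T \<le> \<Lambda> * sqrt lm / lq + lb + 4"
  shows "ennreal (1 - \<beta>) \<le> pmw_pub_prob mech Dpriv Dpub Q eps T
    (\<lambda>A. A \<in> prob_simplex (set Dpub) \<and> (\<forall>x. x \<notin> set Dpub \<longrightarrow> A x = 0) \<and>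
      max_err Dpriv (set Dpub) Q A
        \<le> 50 * (sqrt (lq * (sqrt lm + lb) / \<Lambda>) + best_mixture_error Dpriv Q (set Dpub)))"
proof -
  define S where "S = set Dpub"
  define R where "R = sqrt (lq * (sqrt lm + lb) / \<Lambda>)"
  define f where "f = best_mixture_error Dpriv Q S"
  define L where "L = real (length Dpriv) * eps / sqrt (2 * real T)"
  define \<rho> where "\<rho> = min (L / 4) (1 / (4 * (f + 2 * R)))"
  have Q_ne: "Q \<noteq> {}" using Q(2) by auto
  have lq: "2/3 \<le> lq" unfolding lq_def using Q(2) by (intro ln_ge_two_thirds) simp
  have lm: "0 \<le> lm" unfolding lm_def using D(2) by (simp add: Suc_le_eq)
  have lb: "0 < lb" unfolding lb_def using \<beta> by simp
  have \<Lambda>: "0 < \<Lambda>" unfolding \<Lambda>_def using D(1) eps by simp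
  have "0 \<le> \<Lambda> * sqrt lm / lq" using \<Lambda> lm lq by simp
  then have T_pos: "0 < T" using T(1) lb by linarith
  have R: "0 < R" unfolding R_def using lq lm lb \<Lambda> by (simp add: add_nonneg_pos)
  have "positive_dist S (empirical Dpub)" unfolding S_def using D(2) by (rule positive_dist_empirical)
  then have simplex_ne: "prob_simplex S \<noteq> {}" using positive_dist_imp_prob_simplex by blast
  then have f: "0 \<le> f" unfolding f_def using Q(1) Q_ne by (rule best_mixture_error_nonneg[rotated 2])
  obtain \<mu> where \<mu>: "\<mu> \<in> prob_simplex S" "\<forall>q\<in>Q. \<bar>qdist q S \<mu> - qdata q Dpriv\<bar> \<le> f + R"
    using best_mixture_error_approx[OF Q(1) Q_ne simplex_ne, of Dpriv "f + R"] R unfolding f_def by auto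
  have "0 < L" unfolding L_def using D(1) eps T_pos by simp
  then have \<rho>: "0 < \<rho>" "\<rho> \<le> L / 4" unfolding \<rho>_def using f R by auto
  show ?thesis
    unfolding S_def[symmetric] R_def[symmetric] f_def[symmetric]
  proof (rule pmw_pub_prob_ge[OF D Q(1) Q_ne q01 eps T_pos \<beta>(1) \<mu>[unfolded S_def] \<rho>[unfolded L_def],
        folded S_def])
    fix A assume A: "positive_dist S A" and err: "max_err Dpriv S Q A \<le> 1 / (4 * \<rho>) + 6 * \<rho> * (f + R)\<^sup>2
      + (8 * \<rho> * ln (real (length Dpub)) + 4 * (real T * ln (sqrt 2 * card Q) + ln (1 / \<beta>))
        / (real (length Dpriv) * eps / sqrt (2 * real T))) / real T"
    have "max_err Dpriv S Q A \<le> 50 * (R + f)"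
    proof (cases "length Dpub = 1")
      case True
      then obtain x0 where "S = {x0}" unfolding S_def by (cases Dpub) auto
      then have "max_err Dpriv S Q A = f" using max_err_singleton A unfolding f_def by simp
      then show ?thesis using R f by simp
    next
      case False
      moreover have "length Dpub \<noteq> 0" using D(2) by simp
      ultimately have lm': "2/3 \<le> lm" unfolding lm_def by (intro ln_ge_two_thirds) linarith
      have "max_err Dpriv S Q A \<le> 1"
        using max_err_le_one[OF Q(1) Q_ne A] q01 D(1) unfolding S_def
        by (auto intro: qdata_nonneg qdata_le_one)
      moreover have "0 \<le> ln (sqrt 2 * card Q)" "ln (sqrt 2 * card Q) \<le> 3/2 * lq"
        unfolding lq_def using ln_sqrt2_mult_bounds[of "real (card Q)"] Q(2) by auto
      moreover have L_eq: "L = \<Lambda> / sqrt (2 * real T)" unfolding L_def \<Lambda>_def ..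
      ultimately show ?thesis
        using err[folded L_def lm_def lb_def] by (intro pmw_error_le[OF R_def L_eq \<rho>_def lq lm' lb \<Lambda> f _ _ T])
    qed
    then show "A \<in> prob_simplex S \<and> (\<forall>x. x \<notin> S \<longrightarrow> A x = 0) \<and> max_err Dpriv S Q A \<le> 50 * (R + f)"
      using A positive_dist_imp_prob_simplex by (auto simp: positive_dist_def)
  qed
qed

theorem mainTheorem3:
  shows "\<exists>cT>0. \<exists>C>0. \<forall>(mech::sel_mech) (X::nat set) (Dpriv::nat list) (Dpub::nat list)
            (Q::(nat \<Rightarrow> real) set) (eps::real) (\<beta>::real).
     finite X \<and> Dpriv \<noteq> [] \<and> Dpub \<noteq> [] \<and> set Dpriv \<subseteq> X \<and> set Dpub \<subseteq> X \<and>
     finite Q \<and> card Q \<ge> 2 \<and> (\<forall>q\<in>Q. \<forall>x\<in>X. 0 \<le> q x \<and> q x \<le> 1) \<and>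
     0 < eps \<and> 0 < \<beta> \<and> \<beta> < 1 \<longrightarrow>
     (let n = real (length Dpriv); m = real (length Dpub);
          T = nat \<lceil>cT * (n * eps * sqrt (ln m) / ln (real (card Q)) + ln (1 / \<beta>))\<rceil>
      in pmw_pub_prob mech Dpriv Dpub Q eps T
           (\<lambda>A. A \<in> prob_simplex (set Dpub) \<and> (\<forall>x. x \<notin> set Dpub \<longrightarrow> A x = 0) \<and>
                Max ((\<lambda>q. \<bar>qdist q (set Dpub) A - qdata q Dpriv\<bar>) ` Q)
                  \<le> C * (sqrt (ln (real (card Q)) * (sqrt (ln m) + ln (1 / \<beta>)) / (n * eps))
                         + best_mixture_error Dpriv Q (set Dpub)))
         \<ge> ennreal (1 - \<beta>))"
proof (rule exI[of _ "1/4"], rule conjI, simp, rule exI[of _ 50], rule conjI, simp,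
    intro allI impI, unfold Let_def, goal_cases)
  case (1 mech X Dpriv Dpub Q eps \<beta>)
  then have q01: "\<forall>q\<in>Q. \<forall>x\<in>set Dpriv \<union> set Dpub. 0 \<le> q x \<and> q x \<le> 1" by blast
  define x where "x = real (length Dpriv) * eps * sqrt (ln (real (length Dpub))) / ln (real (card Q))
    + ln (1 / \<beta>)"
  have "0 \<le> x" unfolding x_def using 1 by (simp add: Suc_le_eq)
  then have T: "x \<le> 4 * real (nat \<lceil>1 / 4 * x\<rceil>)" "4 * real (nat \<lceil>1 / 4 * x\<rceil>) \<le> x + 4"
    by linarith+
  show ?case
    by (rule pmw_pub_accuracy[unfolded max_err_def]) (use 1 q01 T[unfolded x_def] in auto)
qed

end
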